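(* Let $\mathbb{QU}$ be the rational Urysohn space and let $\mathbf{A},\mathbf{B}\subset\mathbb{QU}$ be finite. Then $\mathrm{Iso}_{\mathbf{A}\cap\mathbf{B}}(\mathbb{QU})=\overline{\langle\mathrm{Iso}_{\mathbf{A}}(\mathbb{QU}),\mathrm{Iso}_{\mathbf{B}}(\mathbb{QU})\rangle}$.
   Context: The rational Urysohn space $\mathbb{QU}$ is the unique countable metric space with rational distances into which every finite metric space with rational distances embeds isometrically and in which every isometry between finite subsets extends to an isometry of $\mathbb{QU}$. Its isometry group carries the topology of pointwise convergence ($\mathbb{QU}$ taken discrete), and the closure is taken in this topology. For $\mathbf{D}\subseteq\mathbb{QU}$, $\mathrm{Iso}_{\mathbf{D}}(\mathbb{QU})$ is the subgroup of isometries fixing $\mathbf{D}$ pointwise; $\langle X,Y\rangle$ is the subgroup generated by $X\cup Y$. *)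

theory Defs
  imports "HOL-Analysis.Analysis" "HOL-Algebra.Bij" "HOL-Algebra.Generated_Groups"
begin

definition rat_metric :: "'b set \<Rightarrow> ('b \<Rightarrow> 'b \<Rightarrow> rat) \<Rightarrow> bool" where
  "rat_metric S e \<longleftrightarrow>
     (\<forall>x\<in>S. \<forall>y\<in>S. e x y \<ge> 0 \<and> (e x y = 0 \<longleftrightarrow> x = y) \<and> e x y = e y x) \<and>
     (\<forall>x\<in>S. \<forall>y\<in>S. \<forall>z\<in>S. e x z \<le> e x y + e y z)"

definition isometries :: "('a \<Rightarrow> 'a \<Rightarrow> rat) \<Rightarrow> ('a \<Rightarrow> 'a) set" where
  "isometries d = {g. bij g \<and> (\<forall>x y. d (g x) (g y) = d x y)}"

definition iso_fix :: "('a \<Rightarrow> 'a \<Rightarrow> rat) \<Rightarrow> 'a set \<Rightarrow> ('a \<Rightarrow> 'a) set" where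
  "iso_fix d D = {g \<in> isometries d. \<forall>x\<in>D. g x = x}"

text \<open>The rational Urysohn space: a countable rational metric space (the whole type 'a)
  into which every finite rational metric space embeds isometrically (finite spaces are
  represented, up to isometry, on finite sets of naturals) and which is ultrahomogeneous.\<close>
definition rational_Urysohn :: "('a::countable \<Rightarrow> 'a \<Rightarrow> rat) \<Rightarrow> bool" where
  "rational_Urysohn d \<longleftrightarrow> rat_metric UNIV d \<and>
     (\<forall>(F::nat set) e. finite F \<and> rat_metric F e \<longrightarrow>
        (\<exists>f. \<forall>x\<in>F. \<forall>y\<in>F. d (f x) (f y) = e x y)) \<and>
     (\<forall>A f. finite A \<and> (\<forall>x\<in>A. \<forall>y\<in>A. d (f x) (f y) = d x y) \<longrightarrow>
        (\<exists>g\<in>isometries d. \<forall>x\<in>A. g x = f x))"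

definition iso_topology :: "('a \<Rightarrow> 'a \<Rightarrow> rat) \<Rightarrow> ('a \<Rightarrow> 'a) topology" where
  "iso_topology d = subtopology (product_topology (\<lambda>_. discrete_topology UNIV) UNIV) (isometries d)"

end

theory Submission
  imports Defs
begin

text \<open>
  The inclusion \<open>\<supseteq>\<close> is a matter of closedness of stabilisers. For \<open>\<subseteq>\<close> we show that the two
  groups have the same orbits: given \<open>x\<close> and \<open>g \<in> Iso_{A\<inter>B}\<close>, alternately apply elements of
  \<open>Iso_A\<close> and \<open>Iso_B\<close>, each moving the current point "as far as possible" (realising the free
  amalgam distances through the fixed set by a Katetov extension). Every such round raises a
  lower bound on the distances to \<open>A \<union> B\<close> by the minimal separation \<open>m\<close> of \<open>A \<union> B\<close>, so after
  finitely many rounds both \<open>x\<close> and \<open>g x\<close> reach points at the free-amalgam distances over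
  \<open>A \<inter> B\<close>, which depend only on the distances to \<open>A \<inter> B\<close>; a last element of \<open>Iso_A\<close> joins
  them. An induction over finite sets upgrades equal orbits to density in the pointwise topology.
\<close>

abbreviation BG :: "('a \<Rightarrow> 'a) monoid" where "BG \<equiv> BijGroup UNIV"

lemma BG_carrier: "carrier BG = {f. bij f}"
  by (simp add: BijGroup_def Bij_def)

lemma BG_mult: "bij f \<Longrightarrow> bij g \<Longrightarrow> f \<otimes>\<^bsub>BG\<^esub> g = f \<circ> g"
  by (simp add: BijGroup_def Bij_def compose_def restrict_UNIV comp_def)

lemma BG_one: "\<one>\<^bsub>BG\<^esub> = id"
  by (simp add: BijGroup_def id_def restrict_UNIV)

lemma BG_inv: "bij f \<Longrightarrow> inv\<^bsub>BG\<^esub> f = inv_into UNIV f"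
  by (simp add: inv_BijGroup Bij_def restrict_UNIV)

lemma generate_bij_closed:
  assumes S: "S \<subseteq> {f. bij f}"
  shows generate_bij: "h \<in> generate BG S \<Longrightarrow> bij h"
    and generate_comp: "a \<in> generate BG S \<Longrightarrow> b \<in> generate BG S \<Longrightarrow> a \<circ> b \<in> generate BG S"
    and generate_inv: "a \<in> generate BG S \<Longrightarrow> inv_into UNIV a \<in> generate BG S"
    and generate_id: "id \<in> generate BG S"
proof -
  have S': "S \<subseteq> carrier BG" using S BG_carrier by blast
  show gb: "bij h" if "h \<in> generate BG S" for h
    using group.generate_in_carrier[OF group_BijGroup S' that] BG_carrier by blast
  show "a \<circ> b \<in> generate BG S" if "a \<in> generate BG S" "b \<in> generate BG S" for a b
    using generate.eng[OF that] BG_mult[OF gb gb, OF that] by simp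
  show "inv_into UNIV a \<in> generate BG S" if "a \<in> generate BG S" for a
    using group.generate_m_inv_closed[OF group_BijGroup S' that] BG_inv[OF gb[OF that]] by simp
  show "id \<in> generate BG S" by (metis generate.one BG_one)
qed

lemma isometries_inv:
  assumes "g \<in> isometries d" shows "inv_into UNIV g \<in> isometries d"
proof -
  have b: "bij g" and dg: "\<And>x y. d (g x) (g y) = d x y" using assms by (auto simp: isometries_def)
  have "d (inv_into UNIV g x) (inv_into UNIV g y) = d x y" for x y
    using dg[of "inv_into UNIV g x" "inv_into UNIV g y"] b by (simp add: bij_is_surj surj_f_inv_f)
  then show ?thesis using b by (simp add: isometries_def bij_imp_bij_inv)
qed

lemma iso_fix_bij: "iso_fix d D \<subseteq> {f. bij f}"
  by (auto simp: iso_fix_def isometries_def)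

lemma iso_fix_subgroup: "subgroup (iso_fix d D) BG"
proof (rule subgroup.intro)
  show "iso_fix d D \<subseteq> carrier BG" using iso_fix_bij BG_carrier by blast
  show "x \<otimes>\<^bsub>BG\<^esub> y \<in> iso_fix d D" if "x \<in> iso_fix d D" "y \<in> iso_fix d D" for x y
    using that by (auto simp: BG_mult iso_fix_def isometries_def bij_comp)
  show "\<one>\<^bsub>BG\<^esub> \<in> iso_fix d D" by (simp add: BG_one iso_fix_def isometries_def)
  show "inv\<^bsub>BG\<^esub> x \<in> iso_fix d D" if "x \<in> iso_fix d D" for x
    using that isometries_inv
    by (auto simp: BG_inv iso_fix_def isometries_def bij_is_inj inv_f_eq)
qed

abbreviation iso_join :: "('a \<Rightarrow> 'a \<Rightarrow> rat) \<Rightarrow> 'a set \<Rightarrow> 'a set \<Rightarrow> ('a \<Rightarrow> 'a) set" where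
  "iso_join d A B \<equiv> generate BG (iso_fix d A \<union> iso_fix d B)"

lemma iso_join_generators_bij: "iso_fix d A \<union> iso_fix d B \<subseteq> {f. bij f}"
  using iso_fix_bij by blast

lemma iso_join_incl:
  shows iso_join_inclA: "f \<in> iso_fix d A \<Longrightarrow> f \<in> iso_join d A B"
    and iso_join_inclB: "f \<in> iso_fix d B \<Longrightarrow> f \<in> iso_join d A B"
  by (simp_all add: generate.incl)

lemma generate_iso_fix_subset: "iso_join d A B \<subseteq> iso_fix d (A \<inter> B)"
  by (rule group.generate_subgroup_incl[OF group_BijGroup _ iso_fix_subgroup])
    (auto simp: iso_fix_def)

lemma iso_join_mono:
  assumes "A \<subseteq> A'" "B \<subseteq> B'" shows "iso_join d A' B' \<subseteq> iso_join d A B"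
proof (rule group.mono_generate[OF group_BijGroup])
  show "iso_fix d A' \<union> iso_fix d B' \<subseteq> iso_fix d A \<union> iso_fix d B"
    using assms by (auto simp: iso_fix_def)
qed

lemma urysohn_metric:
  assumes "rational_Urysohn d"
  shows dpos: "d x y \<ge> 0" and dzero: "d x y = 0 \<longleftrightarrow> x = y" and dsym: "d x y = d y x"
    and dtri: "d x z \<le> d x y + d y z"
  using assms by (auto simp: rational_Urysohn_def rat_metric_def)

lemma d_refl: "rational_Urysohn d \<Longrightarrow> d x x = 0"
  using dzero by blast

lemma urysohn_embed:
  assumes "rational_Urysohn d" "finite (F::nat set)" "rat_metric F e"
  shows "\<exists>f. \<forall>x\<in>F. \<forall>y\<in>F. d (f x) (f y) = e x y"
  using assms unfolding rational_Urysohn_def by blast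

lemma urysohn_extend:
  assumes "rational_Urysohn d" "finite A" "\<forall>x\<in>A. \<forall>y\<in>A. d (f x) (f y) = d x y"
  shows "\<exists>g\<in>isometries d. \<forall>x\<in>A. g x = f x"
  using assms unfolding rational_Urysohn_def by blast

lemma iso_fix_orbit:
  assumes RU: "rational_Urysohn d" and fin: "finite X" and eq: "\<forall>x\<in>X. d v x = d w x"
  shows "\<exists>h\<in>iso_fix d X. h w = v"
proof -
  let ?f = "\<lambda>y. if y = w then v else y"
  have eq': "\<forall>x\<in>X. d x v = d x w" using eq dsym[OF RU] by metis
  have "d (?f x) (?f y) = d x y" if "x \<in> insert w X" "y \<in> insert w X" for x y
    using that eq eq' by (cases "x = w"; cases "y = w"; simp add: d_refl[OF RU])
  then obtain g where g: "g \<in> isometries d" "\<forall>x\<in>insert w X. g x = ?f x"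
    using urysohn_extend[OF RU, of "insert w X" ?f] fin by blast
  have "v = w" if "w \<in> X"
    using eq that d_refl[OF RU] dzero[OF RU] by metis
  then have "\<forall>x\<in>X. g x = x" using g by auto
  then show ?thesis using g by (auto simp: iso_fix_def)
qed

lemma one_point_extension_metric:
  fixes n :: nat and \<sigma> :: "nat \<Rightarrow> 'a"
  assumes met: "rat_metric S d" and \<sigma>: "bij_betw \<sigma> {..<n} S"
    and pos: "\<forall>s\<in>S. r s > 0"
    and lip: "\<forall>s\<in>S. \<forall>t\<in>S. r s \<le> r t + d s t"
    and tri: "\<forall>s\<in>S. \<forall>t\<in>S. d s t \<le> r s + r t"
  shows "rat_metric {..n} (\<lambda>i j. if i < n \<and> j < n then d (\<sigma> i) (\<sigma> j)
       else if i < n then r (\<sigma> i) else if j < n then r (\<sigma> j) else 0)" (is "rat_metric _ ?e")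
proof -
  have \<sigma>S: "\<And>i. i < n \<Longrightarrow> \<sigma> i \<in> S" and \<sigma>inj: "\<And>i j. i < n \<Longrightarrow> j < n \<Longrightarrow> \<sigma> i = \<sigma> j \<Longrightarrow> i = j"
    using \<sigma> by (auto simp: bij_betw_def inj_on_def)
  have dS: "\<And>s t. s \<in> S \<Longrightarrow> t \<in> S \<Longrightarrow> d s t \<ge> 0 \<and> (d s t = 0 \<longleftrightarrow> s = t) \<and> d s t = d t s"
    and dtriS: "\<And>s t u. s \<in> S \<Longrightarrow> t \<in> S \<Longrightarrow> u \<in> S \<Longrightarrow> d s u \<le> d s t + d t u"
    using met by (auto simp: rat_metric_def)
  have rpos: "\<And>i. i < n \<Longrightarrow> r (\<sigma> i) > 0" using pos \<sigma>S by blast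
  have basic: "?e i j \<ge> 0 \<and> (?e i j = 0 \<longleftrightarrow> i = j) \<and> ?e i j = ?e j i"
    if "i < n \<or> i = n" "j < n \<or> j = n" for i j
    using that dS[OF \<sigma>S \<sigma>S, of i j] \<sigma>inj[of i j] rpos[of i] rpos[of j]
    by (elim disjE) (auto simp: less_imp_le)
  have lip\<sigma>: "\<And>a b. a < n \<Longrightarrow> b < n \<Longrightarrow> r (\<sigma> a) \<le> r (\<sigma> b) + d (\<sigma> b) (\<sigma> a)"
    and tri\<sigma>: "\<And>a b. a < n \<Longrightarrow> b < n \<Longrightarrow> d (\<sigma> a) (\<sigma> b) \<le> r (\<sigma> a) + r (\<sigma> b)"
    using lip tri \<sigma>S dS by metis+
  have "?e i k \<le> ?e i j + ?e j k" for i j k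
    using lip\<sigma>[of i j] lip\<sigma>[of k j] tri\<sigma>[of i k] dtriS[OF \<sigma>S \<sigma>S \<sigma>S, of i j k] rpos[of j]
      dS[OF \<sigma>S \<sigma>S, of i j]
    by (cases "i < n"; cases "j < n"; cases "k < n"; simp; linarith)
  moreover have "i \<in> {..n} \<longleftrightarrow> i < n \<or> i = n" for i by auto
  ultimately show ?thesis using basic by (simp add: rat_metric_def)
qed

text \<open>Embed the one-point extension, then move the
  embedded copy of \<open>S\<close> back onto \<open>S\<close> by ultrahomogeneity.\<close>
lemma katetov_realized:
  assumes RU: "rational_Urysohn d" and fin: "finite S"
    and nn: "\<forall>s\<in>S. r s \<ge> 0"
    and lip: "\<forall>s\<in>S. \<forall>t\<in>S. r s \<le> r t + d s t"
    and tri: "\<forall>s\<in>S. \<forall>t\<in>S. d s t \<le> r s + r t"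
  shows "\<exists>z. \<forall>s\<in>S. d z s = r s"
proof (cases "\<exists>s0\<in>S. r s0 = 0")
  case True
  then obtain s0 where s0: "s0 \<in> S" "r s0 = 0" by blast
  have "d s0 s = r s" if "s \<in> S" for s
    using lip tri s0 that dsym[OF RU, of s s0] by force
  then show ?thesis by blast
next
  case False
  then have rpos: "\<forall>s\<in>S. r s > 0" using nn by force
  have metS: "rat_metric S d"
    using RU by (auto simp: rational_Urysohn_def rat_metric_def)
  define n where "n = card S"
  obtain \<sigma> where \<sigma>: "bij_betw \<sigma> {..<n} S"
    using ex_bij_betw_nat_finite[OF fin] by (auto simp: n_def atLeast0LessThan)
  define e where "e = (\<lambda>i j. if i < n \<and> j < n then d (\<sigma> i) (\<sigma> j)
       else if i < n then r (\<sigma> i) else if j < n then r (\<sigma> j) else 0)"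
  have met: "rat_metric {..n} e"
    unfolding e_def by (rule one_point_extension_metric[OF metS \<sigma> rpos lip tri])
  obtain f where f: "\<forall>i\<in>{..n}. \<forall>j\<in>{..n}. d (f i) (f j) = e i j"
    using urysohn_embed[OF RU _ met] by blast
  have e0: "i = j" if "e i j = 0" "i \<le> n" "j \<le> n" for i j
    using met that unfolding rat_metric_def atMost_iff by blast
  have finj: "inj_on f {..<n}"
    using f e0 d_refl[OF RU] by (intro inj_onI) (metis lessThan_iff atMost_iff less_imp_le)
  define \<phi> where "\<phi> y = \<sigma> (inv_into {..<n} f y)" for y
  have \<phi>f: "\<phi> (f i) = \<sigma> i" if "i < n" for i using finj that by (simp add: \<phi>_def)
  have "\<forall>x\<in>f ` {..<n}. \<forall>y\<in>f ` {..<n}. d (\<phi> x) (\<phi> y) = d x y"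
    using f \<phi>f by (auto simp: e_def)
  then obtain g where g: "g \<in> isometries d" "\<forall>x\<in>f ` {..<n}. g x = \<phi> x"
    using urysohn_extend[OF RU finite_imageI[OF finite_lessThan]] by blast
  have "d (g (f n)) s = r s" if "s \<in> S" for s
  proof -
    obtain j where j: "j < n" "s = \<sigma> j" using \<sigma> \<open>s \<in> S\<close> by (auto simp: bij_betw_def)
    have "d (g (f n)) s = d (g (f n)) (g (f j))" using g \<phi>f j by simp
    also have "\<dots> = d (f n) (f j)" using g by (simp add: isometries_def)
    also have "\<dots> = r s" using f j by (simp add: e_def)
    finally show ?thesis .
  qed
  then show ?thesis by blast
qed

text \<open>As a function of \<open>u\<close> this is the largest Katetov function (bounded by \<open>K\<close>) that
  agrees with \<open>d w\<close> on \<open>X\<close>: the distances of \<open>w\<close> in the free amalgam over \<open>X\<close>.\<close>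
definition via_dist :: "('a \<Rightarrow> 'a \<Rightarrow> rat) \<Rightarrow> rat \<Rightarrow> 'a set \<Rightarrow> 'a \<Rightarrow> 'a \<Rightarrow> rat" where
  "via_dist d K X w u = Min (insert K ((\<lambda>x. d w x + d x u) ` X))"

lemma via_dist_le_cap: "finite X \<Longrightarrow> via_dist d K X w u \<le> K"
  by (simp add: via_dist_def)

lemma via_dist_le: "finite X \<Longrightarrow> x \<in> X \<Longrightarrow> via_dist d K X w u \<le> d w x + d x u"
  by (simp add: via_dist_def)

lemma via_dist_cases:
  "finite X \<Longrightarrow> via_dist d K X w u = K \<or> (\<exists>x\<in>X. via_dist d K X w u = d w x + d x u)"
  using Min_in[of "insert K ((\<lambda>x. d w x + d x u) ` X)"] by (auto simp: via_dist_def)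

lemma via_dist_lipschitz:
  assumes RU: "rational_Urysohn d" and fin: "finite X"
  shows "via_dist d K X w s \<le> via_dist d K X w t + d t s"
  using via_dist_cases[OF fin, of d K w t]
proof
  assume "via_dist d K X w t = K"
  then show ?thesis using via_dist_le_cap[OF fin] dpos[OF RU, of t s] by (metis add_increasing2)
next
  assume "\<exists>x\<in>X. via_dist d K X w t = d w x + d x t"
  then obtain x where x: "x \<in> X" "via_dist d K X w t = d w x + d x t" by blast
  have "via_dist d K X w s \<le> d w x + d x s" using via_dist_le[OF fin x(1)] .
  also have "\<dots> \<le> d w x + (d x t + d t s)" using dtri[OF RU] by simp
  finally show ?thesis using x(2) by simp
qed

lemma via_dist_nonneg:
  "rational_Urysohn d \<Longrightarrow> finite X \<Longrightarrow> 0 \<le> K \<Longrightarrow> 0 \<le> via_dist d K X w u"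
  using via_dist_cases[of X d K w u] dpos[of d] by (metis add_nonneg_nonneg)

lemma via_dist_on_set:
  assumes RU: "rational_Urysohn d" and fin: "finite X" and x: "x \<in> X" and K: "d w x \<le> K"
  shows "via_dist d K X w x = d w x"
proof (rule antisym)
  show "via_dist d K X w x \<le> d w x"
    using via_dist_le[OF fin x, of d K w x] d_refl[OF RU, of x] by simp
  show "d w x \<le> via_dist d K X w x"
    using via_dist_cases[OF fin, of d K w x] K dtri[OF RU] by auto
qed

lemma via_dist_maximal:
  assumes RU: "rational_Urysohn d" and fin: "finite C"
    and same: "\<forall>c\<in>C. d w c = d w0 c" and K: "d w u \<le> K"
  shows "d w u \<le> via_dist d K C w0 u"
  using via_dist_cases[OF fin, of d K w0 u]
proof
  assume "\<exists>c\<in>C. via_dist d K C w0 u = d w0 c + d c u"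
  then obtain c where c: "c \<in> C" "via_dist d K C w0 u = d w0 c + d c u" by blast
  show ?thesis using dtri[OF RU, of w u c] same c by simp
qed (use K in simp)

lemma via_dist_katetov:
  assumes RU: "rational_Urysohn d" and fX: "finite X" and Kd: "\<forall>s\<in>Q. \<forall>t\<in>Q. d s t \<le> K"
    and K0: "0 \<le> K"
  shows "\<forall>s\<in>Q. \<forall>t\<in>Q. d s t \<le> via_dist d K X w s + via_dist d K X w t"
proof (intro ballI)
  fix s t assume s: "s \<in> Q" and t: "t \<in> Q"
  let ?L = "via_dist d K X w"
  have L0: "?L s \<ge> 0" "?L t \<ge> 0" using via_dist_nonneg[OF RU fX K0] by auto
  show "d s t \<le> ?L s + ?L t"
  proof (cases "?L s = K \<or> ?L t = K")
    case True
    then show ?thesis using Kd s t L0 by force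
  next
    case False
    then obtain x y where x: "?L s = d w x + d x s" and y: "?L t = d w y + d y t"
      using via_dist_cases[OF fX, of d K w] by metis
    have "d s t \<le> d s x + d x w + (d w y + d y t)"
      using dtri[OF RU, of s t x] dtri[OF RU, of x t w] dtri[OF RU, of w t y] by linarith
    then show ?thesis using x y dsym[OF RU, of s x] dsym[OF RU, of x w] by linarith
  qed
qed

lemma maximal_move:
  assumes RU: "rational_Urysohn d" and fQ: "finite Q" and XQ: "X \<subseteq> Q"
    and Kd: "\<forall>s\<in>Q. \<forall>t\<in>Q. d s t \<le> K" and K0: "0 \<le> K" and wK: "\<forall>x\<in>X. d w x \<le> K"
  shows "\<exists>h\<in>iso_fix d X. \<forall>u\<in>Q. d (h w) u = via_dist d K X w u"
proof -
  have fX: "finite X" using fQ XQ finite_subset by blast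
  have nn: "\<forall>u\<in>Q. 0 \<le> via_dist d K X w u" using via_dist_nonneg[OF RU fX K0] by blast
  have lip: "\<forall>s\<in>Q. \<forall>t\<in>Q. via_dist d K X w s \<le> via_dist d K X w t + d s t"
    using via_dist_lipschitz[OF RU fX] dsym[OF RU] by metis
  obtain z where z: "\<forall>u\<in>Q. d z u = via_dist d K X w u"
    using katetov_realized[OF RU fQ nn lip via_dist_katetov[OF RU fX Kd K0]] by blast
  have "\<forall>x\<in>X. d z x = d w x" using z XQ via_dist_on_set[OF RU fX] wK by (metis subsetD)
  then obtain h where "h \<in> iso_fix d X" "h w = z" using iso_fix_orbit[OF RU fX] by blast
  then show ?thesis using z by blast
qed

text \<open>Write \<open>P = via_dist d K C w0\<close> for the target distances. If the
  distances of \<open>w\<close> to \<open>X \<supseteq> C\<close> are at least \<open>P\<close> truncated at \<open>t\<close>, then the maximal move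
  over \<open>X\<close> places \<open>w\<close> at least \<open>min P (t + m)\<close> away from every point \<open>u\<close> at distance
  \<open>\<ge> m\<close> from \<open>X\<close>: a path through \<open>X\<close> either already has length \<open>\<ge> P u\<close> or passes a point
  at distance \<open>\<ge> t\<close> and then makes a further step \<open>\<ge> m\<close>.\<close>
lemma via_dist_raises_bound:
  assumes RU: "rational_Urysohn d" and fX: "finite X" and CX: "C \<subseteq> X"
    and sep: "\<forall>x\<in>X. m \<le> d x u"
    and low: "\<forall>x\<in>X. min (via_dist d K C w0 x) t \<le> d w x"
  shows "min (via_dist d K C w0 u) (t + m) \<le> via_dist d K X w u"
proof -
  have fC: "finite C" using fX CX finite_subset by blast
  from via_dist_cases[OF fX, of d K w u] show ?thesis
  proof
    assume "via_dist d K X w u = K"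
    then show ?thesis using via_dist_le_cap[OF fC, of d K w0 u] by (simp add: min.coboundedI1)
  next
    assume "\<exists>x\<in>X. via_dist d K X w u = d w x + d x u"
    then obtain x where x: "x \<in> X" and L: "via_dist d K X w u = d w x + d x u" by blast
    have lip: "via_dist d K C w0 u \<le> via_dist d K C w0 x + d x u"
      using via_dist_lipschitz[OF RU fC] .
    show ?thesis
    proof (cases "via_dist d K C w0 x \<le> t")
      case True
      then have "via_dist d K C w0 x \<le> d w x" using low x by (metis min.absorb1)
      then have "via_dist d K C w0 u \<le> d w x + d x u" using lip by linarith
      then show ?thesis using L by (simp add: min.coboundedI1)
    next
      case False
      then have "t \<le> d w x" using low x by (metis min.absorb2 nle_le)
      then have "t + m \<le> d w x + d x u" using sep x by (simp add: add_mono)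
      then show ?thesis using L by (simp add: min.coboundedI2)
    qed
  qed
qed

lemma half_round:
  assumes RU: "rational_Urysohn d" and fQ: "finite Q" and CX: "C \<subseteq> X" and XQ: "X \<subseteq> Q"
    and Kd: "\<forall>s\<in>Q. \<forall>t\<in>Q. d s t \<le> K" and K0: "0 \<le> K"
    and sep: "\<forall>s\<in>Q. \<forall>t\<in>Q. s \<noteq> t \<longrightarrow> m \<le> d s t"
    and wK: "\<forall>u\<in>Q. d w u \<le> K"
    and low: "\<forall>x\<in>X. min (via_dist d K C w0 x) t \<le> d w x"
  shows "\<exists>h\<in>iso_fix d X. (\<forall>x\<in>X. d (h w) x = d w x) \<and> (\<forall>u\<in>Q. d (h w) u \<le> K)
          \<and> (\<forall>u\<in>Q - X. min (via_dist d K C w0 u) (t + m) \<le> d (h w) u)"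
proof -
  have fX: "finite X" using fQ XQ finite_subset by blast
  obtain h where h: "h \<in> iso_fix d X" and hw: "\<forall>u\<in>Q. d (h w) u = via_dist d K X w u"
    using maximal_move[OF RU fQ XQ Kd K0] wK XQ by blast
  have "\<forall>x\<in>X. d (h w) x = d w x" using hw XQ wK via_dist_on_set[OF RU fX] by auto
  moreover have "\<forall>u\<in>Q. d (h w) u \<le> K" using hw via_dist_le_cap[OF fX] by simp
  moreover have "min (via_dist d K C w0 u) (t + m) \<le> d (h w) u" if u: "u \<in> Q - X" for u
  proof -
    have "\<forall>x\<in>X. m \<le> d x u" using sep XQ u by auto
    then show ?thesis using via_dist_raises_bound[OF RU fX CX _ low] hw u by auto
  qed
  ultimately show ?thesis using h by blast
qed

definition amalgam_approx ::
    "('a \<Rightarrow> 'a \<Rightarrow> rat) \<Rightarrow> rat \<Rightarrow> 'a set \<Rightarrow> 'a set \<Rightarrow> 'a \<Rightarrow> rat \<Rightarrow> 'a \<Rightarrow> bool" where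
  "amalgam_approx d K C Q w0 t w \<longleftrightarrow> (\<forall>c\<in>C. d w c = d w0 c) \<and>
     (\<forall>u\<in>Q. d w u \<le> K \<and> min (via_dist d K C w0 u) t \<le> d w u)"

lemma amalgam_approx_start:
  assumes RU: "rational_Urysohn d" and "\<forall>c\<in>C. d w c = d w0 c" and "\<forall>u\<in>Q. d w u \<le> K"
  shows "amalgam_approx d K C Q w0 0 w"
  using assms dpos[OF RU, of w] by (auto simp: amalgam_approx_def min.coboundedI2)

text \<open>Once the truncation level exceeds \<open>K\<close>, the distances to \<open>Q\<close> are pinned down exactly;
  they depend only on the distances of \<open>w0\<close> to \<open>C\<close>.\<close>
lemma amalgam_approx_exact:
  assumes RU: "rational_Urysohn d" and fC: "finite C" and Kt: "K \<le> t"
    and w: "amalgam_approx d K C Q w0 t w" and u: "u \<in> Q"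
  shows "d w u = via_dist d K C w0 u"
proof (rule antisym)
  have "via_dist d K C w0 u \<le> t" using via_dist_le_cap[OF fC] Kt order_trans by blast
  then show "via_dist d K C w0 u \<le> d w u"
    using w u by (auto simp: amalgam_approx_def min_absorb1)
  show "d w u \<le> via_dist d K C w0 u"
    using via_dist_maximal[OF RU fC] w u by (auto simp: amalgam_approx_def)
qed

text \<open>Distances to \<open>C = A \<inter> B\<close> are never changed, and there the lower
  bound holds anyway.\<close>
lemma round_raises:
  assumes RU: "rational_Urysohn d" and fA: "finite A" and fB: "finite B"
    and Kd: "\<forall>s\<in>A \<union> B. \<forall>t\<in>A \<union> B. d s t \<le> K" and K0: "0 \<le> K" and m0: "0 \<le> m"
    and sep: "\<forall>s\<in>A \<union> B. \<forall>t\<in>A \<union> B. s \<noteq> t \<longrightarrow> m \<le> d s t"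
    and w: "amalgam_approx d K (A \<inter> B) (A \<union> B) w0 t w"
  shows "\<exists>h\<in>iso_join d A B. amalgam_approx d K (A \<inter> B) (A \<union> B) w0 (t + m) (h w)"
proof -
  let ?Q = "A \<union> B" and ?C = "A \<inter> B"
  let ?P = "via_dist d K ?C w0"
  have fQ: "finite ?Q" and fC: "finite ?C" using fA fB by auto
  have PC: "?P c \<le> d w0 c" if "c \<in> ?C" for c
    using via_dist_le[OF fC that, of d K w0 c] d_refl[OF RU, of c] by simp
  have wC: "\<forall>c\<in>?C. d w c = d w0 c" and wK: "\<forall>u\<in>?Q. d w u \<le> K"
    and wlow: "\<forall>u\<in>?Q. min (?P u) t \<le> d w u"
    using w by (auto simp: amalgam_approx_def)
  obtain h1 where h1: "h1 \<in> iso_fix d A" and h1A: "\<forall>x\<in>A. d (h1 w) x = d w x"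
    and h1K: "\<forall>u\<in>?Q. d (h1 w) u \<le> K"
    and h1low: "\<forall>u\<in>?Q - A. min (?P u) (t + m) \<le> d (h1 w) u"
    using half_round[OF RU fQ _ _ Kd K0 sep, of ?C A w w0 t] wK wlow by auto
  have h1lowB: "\<forall>x\<in>B. min (?P x) (t + m) \<le> d (h1 w) x"
    using h1A h1low wC PC by (fastforce simp: min.coboundedI1)
  obtain h2 where h2: "h2 \<in> iso_fix d B" and h2B: "\<forall>x\<in>B. d (h2 (h1 w)) x = d (h1 w) x"
    and h2K: "\<forall>u\<in>?Q. d (h2 (h1 w)) u \<le> K"
    and h2low: "\<forall>u\<in>?Q - B. min (?P u) (t + m + m) \<le> d (h2 (h1 w)) u"
    using half_round[OF RU fQ _ _ Kd K0 sep, of ?C B "h1 w" w0 "t + m"] h1K h1lowB by auto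
  have "min (?P u) (t + m) \<le> d (h2 (h1 w)) u" if "u \<in> ?Q" for u
  proof (cases "u \<in> B")
    case True
    then show ?thesis using h1lowB h2B by simp
  next
    case False
    have "min (?P u) (t + m) \<le> min (?P u) (t + m + m)" using m0 by (simp add: min.mono)
    also have "\<dots> \<le> d (h2 (h1 w)) u" using h2low that False by blast
    finally show ?thesis .
  qed
  then have "amalgam_approx d K ?C ?Q w0 (t + m) ((h2 \<circ> h1) w)"
    using h1A h2B wC h2K by (auto simp: amalgam_approx_def)
  moreover have "h2 \<circ> h1 \<in> iso_join d A B"
    using generate_comp[OF iso_join_generators_bij iso_join_inclB[OF h2] iso_join_inclA[OF h1]] .
  ultimately show ?thesis by blast
qed

lemma iterated_rounds:
  assumes RU: "rational_Urysohn d" and fA: "finite A" and fB: "finite B"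
    and Kd: "\<forall>s\<in>A \<union> B. \<forall>t\<in>A \<union> B. d s t \<le> K" and K0: "0 \<le> K" and m0: "0 \<le> m"
    and sep: "\<forall>s\<in>A \<union> B. \<forall>t\<in>A \<union> B. s \<noteq> t \<longrightarrow> m \<le> d s t"
    and w: "amalgam_approx d K (A \<inter> B) (A \<union> B) w0 t w"
  shows "\<exists>h\<in>iso_join d A B. amalgam_approx d K (A \<inter> B) (A \<union> B) w0 (t + of_nat N * m) (h w)"
proof (induction N)
  case 0
  have "amalgam_approx d K (A \<inter> B) (A \<union> B) w0 (t + of_nat 0 * m) (id w)" using w by simp
  then show ?case using generate_id[OF iso_join_generators_bij] by blast
next
  case (Suc N)
  then obtain h1 where h1: "h1 \<in> iso_join d A B"
    and "amalgam_approx d K (A \<inter> B) (A \<union> B) w0 (t + of_nat N * m) (h1 w)" by blast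
  then obtain h2 where h2: "h2 \<in> iso_join d A B"
    and "amalgam_approx d K (A \<inter> B) (A \<union> B) w0 (t + of_nat N * m + m) (h2 (h1 w))"
    using round_raises[OF RU fA fB Kd K0 m0 sep] by blast
  moreover have "t + of_nat N * m + m = t + of_nat (Suc N) * m" by (simp add: algebra_simps)
  moreover have "h2 \<circ> h1 \<in> iso_join d A B"
    using generate_comp[OF iso_join_generators_bij h2 h1] .
  ultimately show ?case by (metis comp_apply)
qed

lemma finite_diameter_bound:
  assumes "finite P" shows "\<exists>K\<ge>0. \<forall>s\<in>P. \<forall>t\<in>P. d s t \<le> (K::rat)"
proof -
  let ?D = "insert 0 ((\<lambda>(s, t). d s t) ` (P \<times> P))"
  have "finite ?D" using assms by simp
  then have "\<forall>s\<in>P. \<forall>t\<in>P. d s t \<le> Max ?D" and "0 \<le> Max ?D" by (force intro: Max_ge)+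
  then show ?thesis by blast
qed

lemma finite_separation:
  assumes RU: "rational_Urysohn d" and fQ: "finite Q"
  shows "\<exists>m>0. \<forall>s\<in>Q. \<forall>t\<in>Q. s \<noteq> t \<longrightarrow> m \<le> d s t"
proof -
  let ?M = "insert 1 ((\<lambda>(s, t). d s t) ` {p \<in> Q \<times> Q. fst p \<noteq> snd p})"
  have fin: "finite ?M" using fQ by (auto intro: finite_subset[of _ "Q \<times> Q"])
  have "\<And>s t. s \<noteq> t \<Longrightarrow> 0 < d s t" using dpos[OF RU] dzero[OF RU] by (metis order_le_less)
  then have "0 < Min ?M" using fin by (auto simp: Min_gr_iff)
  moreover have "\<forall>s\<in>Q. \<forall>t\<in>Q. s \<noteq> t \<longrightarrow> Min ?M \<le> d s t" using fin by (force intro: Min_le)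
  ultimately show ?thesis by blast
qed

text \<open>Drive both \<open>x\<close> and \<open>g x\<close>
  by enough rounds to points with the free-amalgam distances to \<open>A \<union> B\<close>; these agree on \<open>A\<close>,
  so one further element of \<open>Iso_A\<close> connects them.\<close>
lemma iso_join_orbit:
  assumes RU: "rational_Urysohn d" and fA: "finite A" and fB: "finite B"
    and g: "g \<in> iso_fix d (A \<inter> B)"
  shows "\<exists>k\<in>iso_join d A B. k x = g x"
proof -
  let ?Q = "A \<union> B" and ?C = "A \<inter> B"
  have fQ: "finite ?Q" and fC: "finite ?C" using fA fB by auto
  let ?pts = "insert x (insert (g x) ?Q)"
  obtain K where K0: "0 \<le> K" and "\<forall>s\<in>?pts. \<forall>t\<in>?pts. d s t \<le> K"
    using finite_diameter_bound[of ?pts d] fQ by blast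
  then have Kd: "\<forall>s\<in>?Q. \<forall>t\<in>?Q. d s t \<le> K" and Kx: "\<forall>u\<in>?Q. d x u \<le> K"
    and Kgx: "\<forall>u\<in>?Q. d (g x) u \<le> K" by simp_all
  obtain m where m0: "0 < m" and sep: "\<forall>s\<in>?Q. \<forall>t\<in>?Q. s \<noteq> t \<longrightarrow> m \<le> d s t"
    using finite_separation[OF RU fQ] by blast
  obtain N where N: "K < of_nat N * m" using ex_less_of_nat_mult[OF m0] by blast
  have gC: "\<forall>c\<in>?C. d (g x) c = d x c"
  proof
    fix c assume "c \<in> ?C"
    then have "g c = c" using g by (simp add: iso_fix_def)
    moreover have "d (g x) (g c) = d x c" using g by (simp add: iso_fix_def isometries_def)
    ultimately show "d (g x) c = d x c" by simp
  qed
  note rounds = iterated_rounds[OF RU fA fB Kd K0 less_imp_le[OF m0] sep, where t = 0 and N = N]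
  obtain h1 where h1: "h1 \<in> iso_join d A B"
    and h1x: "amalgam_approx d K ?C ?Q x (of_nat N * m) (h1 x)"
    using rounds[OF amalgam_approx_start[OF RU _ Kx]] by auto
  obtain h2 where h2: "h2 \<in> iso_join d A B"
    and h2x: "amalgam_approx d K ?C ?Q x (of_nat N * m) (h2 (g x))"
    using rounds[OF amalgam_approx_start[OF RU gC Kgx]] by auto
  have "\<forall>u\<in>A. d (h2 (g x)) u = d (h1 x) u"
    using amalgam_approx_exact[OF RU fC _ h1x] amalgam_approx_exact[OF RU fC _ h2x] N by simp
  then obtain k where k: "k \<in> iso_fix d A" "k (h1 x) = h2 (g x)"
    using iso_fix_orbit[OF RU fA] by blast
  have "inv_into UNIV h2 \<circ> (k \<circ> h1) \<in> iso_join d A B"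
    using generate_comp[OF iso_join_generators_bij generate_inv[OF iso_join_generators_bij h2]
        generate_comp[OF iso_join_generators_bij iso_join_inclA[OF k(1)] h1]] .
  moreover have "(inv_into UNIV h2 \<circ> (k \<circ> h1)) x = g x"
    using k(2) generate_bij[OF iso_join_generators_bij h2] by (simp add: bij_is_inj)
  ultimately show ?thesis by blast
qed

lemma iso_fix_stabilizer_step:
  assumes k: "k \<in> iso_fix d C" and g: "g \<in> iso_fix d C" and kx: "k x = g x"
  shows "inv_into UNIV k \<circ> g \<in> iso_fix d (insert x C)"
proof -
  have kb: "bij k" using k by (auto simp: iso_fix_def isometries_def)
  have "inv_into UNIV k \<in> isometries d" using k isometries_inv by (auto simp: iso_fix_def)
  then have "inv_into UNIV k \<circ> g \<in> isometries d"
    using g by (auto simp: iso_fix_def isometries_def bij_comp)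
  moreover have "(inv_into UNIV k \<circ> g) c = c" if "c \<in> insert x C" for c
    using that k g kx kb by (auto simp: iso_fix_def bij_is_inj inv_f_eq)
  ultimately show ?thesis by (auto simp: iso_fix_def)
qed

text \<open>Induction on the finite set: match one point with the orbit lemma, then
  treat the remainder inside \<open>\<langle>Iso_{A+x}, Iso_{B+x}\<rangle>\<close>.\<close>
lemma iso_join_dense:
  assumes RU: "rational_Urysohn d" and fF: "finite F"
  shows "finite A \<Longrightarrow> finite B \<Longrightarrow> g \<in> iso_fix d (A \<inter> B) \<Longrightarrow>
    \<exists>h\<in>iso_join d A B. \<forall>y\<in>F. h y = g y"
  using fF
proof (induction F arbitrary: A B g rule: finite_induct)
  case empty
  then show ?case using generate_id[OF iso_join_generators_bij] by blast
next
  case (insert x F)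
  obtain k where k: "k \<in> iso_join d A B" and kx: "k x = g x"
    using iso_join_orbit[OF RU insert.prems] by blast
  have kC: "k \<in> iso_fix d (A \<inter> B)" using generate_iso_fix_subset k by blast
  have "inv_into UNIV k \<circ> g \<in> iso_fix d (insert x A \<inter> insert x B)"
    using iso_fix_stabilizer_step[OF kC insert.prems(3) kx] by simp
  then obtain h where h: "h \<in> iso_join d (insert x A) (insert x B)"
    and hF: "\<forall>y\<in>F. h y = (inv_into UNIV k \<circ> g) y"
    using insert.IH insert.prems by blast
  have "h \<in> iso_fix d (insert x A \<inter> insert x B)" using h generate_iso_fix_subset by blast
  then have hx: "h x = x" by (simp add: iso_fix_def)
  have "k \<circ> h \<in> iso_join d A B"
    using generate_comp[OF iso_join_generators_bij k] iso_join_mono[of A _ B] h by blast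
  moreover have "\<forall>y\<in>insert x F. (k \<circ> h) y = g y"
    using hF hx kx generate_bij[OF iso_join_generators_bij k] by (auto simp: bij_is_surj surj_f_inv_f)
  ultimately show ?case by blast
qed

lemma pointwise_closure:
  "g \<in> product_topology (\<lambda>_. discrete_topology UNIV) UNIV closure_of S \<longleftrightarrow>
    (\<forall>F. finite F \<longrightarrow> (\<exists>h\<in>S. \<forall>x\<in>F. h x = g x))"
  (is "g \<in> ?P closure_of S \<longleftrightarrow> _")
proof
  assume g: "g \<in> ?P closure_of S"
  show "\<forall>F. finite F \<longrightarrow> (\<exists>h\<in>S. \<forall>x\<in>F. h x = g x)"
  proof (intro allI impI)
    fix F :: "'a set" assume fF: "finite F"
    define U where "U i = (if i \<in> F then {g i} else UNIV)" for i
    have "{i \<in> UNIV. U i \<noteq> topspace (discrete_topology UNIV)} \<subseteq> F" by (auto simp: U_def)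
    then have "openin ?P (Pi\<^sub>E UNIV U)"
      using finite_subset[OF _ fF] by (simp add: openin_PiE_gen)
    moreover have "g \<in> Pi\<^sub>E UNIV U" by (simp add: U_def PiE_iff)
    ultimately obtain h where "h \<in> S" "h \<in> Pi\<^sub>E UNIV U"
      using g unfolding in_closure_of by blast
    moreover have "h x = g x" if "h \<in> Pi\<^sub>E UNIV U" "x \<in> F" for h x
      using that by (auto simp: PiE_iff U_def dest: spec[of _ x])
    ultimately show "\<exists>h\<in>S. \<forall>x\<in>F. h x = g x" by blast
  qed
next
  assume dense: "\<forall>F. finite F \<longrightarrow> (\<exists>h\<in>S. \<forall>x\<in>F. h x = g x)"
  show "g \<in> ?P closure_of S"
    unfolding in_closure_of
  proof (intro conjI allI impI)
    show "g \<in> topspace ?P" by simp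
    fix T assume "g \<in> T \<and> openin ?P T"
    then obtain U where U: "finite {i \<in> UNIV. U i \<noteq> topspace (discrete_topology UNIV)}"
      "g \<in> Pi\<^sub>E UNIV U" "Pi\<^sub>E UNIV U \<subseteq> T"
      unfolding openin_product_topology_alt by blast
    obtain h where h: "h \<in> S" "\<forall>x\<in>{i \<in> UNIV. U i \<noteq> UNIV}. h x = g x"
      using dense U(1) by auto
    have "h \<in> Pi\<^sub>E UNIV U" using h(2) U(2) by (fastforce simp: PiE_iff)
    then show "\<exists>y. y \<in> S \<and> y \<in> T" using h(1) U(3) by blast
  qed
qed

lemma iso_topology_closure:
  assumes "S \<subseteq> isometries d"
  shows "iso_topology d closure_of S =
    {g \<in> isometries d. \<forall>F. finite F \<longrightarrow> (\<exists>h\<in>S. \<forall>x\<in>F. h x = g x)}"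
  using assms by (auto simp: iso_topology_def closure_of_subtopology Int_absorb1 pointwise_closure)

text \<open>The closure consists of the isometries that agree with \<open>\<langle>Iso_A, Iso_B\<rangle>\<close>
  on every finite set; agreement on singletons of \<open>A \<inter> B\<close> forces membership in
  \<open>Iso_{A\<inter>B}\<close>, and conversely density supplies the agreement.\<close>
theorem corollary4p17:
  fixes d :: "'a::countable \<Rightarrow> 'a \<Rightarrow> rat" and A B :: "'a set"
  assumes "rational_Urysohn d" and "finite A" and "finite B"
  shows "iso_fix d (A \<inter> B) =
    (iso_topology d) closure_of (generate (BijGroup UNIV) (iso_fix d A \<union> iso_fix d B))"
proof -
  have sub: "iso_join d A B \<subseteq> iso_fix d (A \<inter> B)" by (rule generate_iso_fix_subset)
  then have closure: "iso_topology d closure_of iso_join d A B =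
    {g \<in> isometries d. \<forall>F. finite F \<longrightarrow> (\<exists>h\<in>iso_join d A B. \<forall>x\<in>F. h x = g x)}"
    by (intro iso_topology_closure) (auto simp: iso_fix_def)
  have "g \<in> iso_fix d (A \<inter> B)" if "g \<in> isometries d"
    and agree: "\<forall>F. finite F \<longrightarrow> (\<exists>h\<in>iso_join d A B. \<forall>x\<in>F. h x = g x)" for g
  proof -
    have "g c = c" if "c \<in> A \<inter> B" for c
      using agree[rule_format, of "{c}"] sub that by (auto simp: iso_fix_def)
    then show ?thesis using \<open>g \<in> isometries d\<close> by (simp add: iso_fix_def)
  qed
  moreover have "g \<in> isometries d" if "g \<in> iso_fix d (A \<inter> B)" for g
    using that by (simp add: iso_fix_def)
  ultimately show ?thesis
    unfolding closure using iso_join_dense[OF assms(1) _ assms(2,3)] by blast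
qed

end
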